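(* Let $p>5$ be a prime. There is no subgroup $H$ of $\mathbb{F}_p^\times$ and no element $g\in\mathbb{F}_p^\times$ such that the set $A:=gH\cup\{0\}$ (where $gH=\{gh\colon h\in H\}$) satisfies $A-A\doteq\mathcal{R}_p$.
   Context: $\mathcal{R}_p\subseteq\mathbb{F}_p$ denotes the set of nonzero quadratic residues modulo $p$. For subsets $A,S$ of an abelian group, $A-A\doteq S$ means: every element of $S$ has exactly one representation as $a'-a''$ with $a',a''\in A$, and every difference $a'-a''$ with $a',a''\in A$, $a'\ne a''$, belongs to $S$. *)

theory Defs
  imports "Berlekamp_Zassenhaus.Finite_Field"
begin

definition quad_res_set :: "'a::field set" where
  "quad_res_set = {x. x \<noteq> 0 \<and> (\<exists>y. y ^ 2 = x)}"

definition diff_exact :: "'a::ab_group_add set \<Rightarrow> 'a set \<Rightarrow> bool" where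
  "diff_exact A S \<longleftrightarrow>
     (\<forall>s\<in>S. \<exists>!(a1, a2). a1 \<in> A \<and> a2 \<in> A \<and> s = a1 - a2) \<and>
     (\<forall>a1\<in>A. \<forall>a2\<in>A. a1 \<noteq> a2 \<longrightarrow> a1 - a2 \<in> S)"

definition mult_subgroup :: "'a::field set \<Rightarrow> bool" where
  "mult_subgroup H \<longleftrightarrow> H \<subseteq> - {0} \<and> 1 \<in> H \<and>
     (\<forall>x\<in>H. \<forall>y\<in>H. x * y \<in> H) \<and> (\<forall>x\<in>H. inverse x \<in> H)"

end

theory Submission
  imports Defs
begin

text \<open>
  Let \<open>\<chi>\<close> be the quadratic character, \<open>n = |A|\<close> and \<open>f(y) = \<Sum>\<^sub>b\<^sub>\<in>\<^sub>A \<chi>(y - b)\<close>. Exactness of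
  \<open>A - A \<doteq> R\<close> gives \<open>p - 1 = 2n(n - 1)\<close>, forces \<open>-1 \<in> R\<close> and \<open>A \<inter> -A = {0}\<close>, and makes
  \<open>f(a) = n - 1\<close> on \<open>A\<close>. For \<open>A = gH \<union> {0}\<close> also \<open>a + b \<in> R\<close> for distinct nonzero
  \<open>a, b \<in> A\<close>, whence \<open>f(-a) \<ge> n - 2\<close>. Jacobsthal's evaluation
  \<open>\<Sum>\<^sub>y \<chi>(y - b)\<chi>(y - c) = p[b = c] - 1\<close> computes \<open>\<Sum>\<^sub>y (f(y) + f(-y))\<^sup>2\<close> exactly, and
  bounding it below by the terms at \<open>0\<close> and \<open>\<plusminus>a\<close> yields \<open>(n - 4)(n - 1)\<^sup>2 \<le> 0\<close>. So \<open>|H| \<le> 3\<close>;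
  \<open>|H| = 2\<close> would mean \<open>H = {\<plusminus>1}\<close>, against \<open>A \<inter> -A = {0}\<close>, and \<open>|H| \<in> {0, 1, 3}\<close> gives
  \<open>p \<in> {1, 5, 25}\<close>.
\<close>

lemma quad_res_set_nonzero: "x \<in> quad_res_set \<Longrightarrow> x \<noteq> 0"
  unfolding quad_res_set_def by auto

lemma square_in_quad_res_set: "(x::'a::field) \<noteq> 0 \<Longrightarrow> x ^ 2 \<in> quad_res_set"
  unfolding quad_res_set_def by auto

lemma quad_res_set_mult:
  "x \<in> quad_res_set \<Longrightarrow> y \<in> quad_res_set \<Longrightarrow> x * y \<in> (quad_res_set::'a::field set)"
  unfolding quad_res_set_def by (auto simp: power_mult_distrib[symmetric] intro: exI[of _ "_ * _"])

lemma quad_res_set_divide: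
  "x \<in> quad_res_set \<Longrightarrow> y \<in> quad_res_set \<Longrightarrow> x / y \<in> (quad_res_set::'a::field set)"
  unfolding quad_res_set_def divide_inverse
  by (auto simp: power_inverse[symmetric] power_mult_distrib[symmetric] intro: exI[of _ "_ * _"])

lemma card_quad_res_set:
  assumes two: "(2::'a::{field,finite}) \<noteq> 0"
  shows "2 * card (quad_res_set::'a set) = CARD('a) - 1"
proof -
  let ?R = "quad_res_set::'a set"
  have two_roots: "card {x. x \<noteq> 0 \<and> x ^ 2 = r} = 2" if "r \<in> ?R" for r
  proof -
    from that have "r \<noteq> 0 \<and> (\<exists>y. y ^ 2 = r)" by (simp add: quad_res_set_def)
    then obtain y where y: "y ^ 2 = r" "r \<noteq> 0" by auto
    then have y0: "y \<noteq> 0" by auto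
    have "x = y \<or> x = -y" if "x ^ 2 = r" for x
    proof -
      have "(x - y) * (x + y) = 0" using y that by (simp add: algebra_simps power2_eq_square)
      then show ?thesis by (auto simp: eq_neg_iff_add_eq_0)
    qed
    then have "{x. x \<noteq> 0 \<and> x ^ 2 = r} = {y, -y}" using y y0 by auto
    moreover have "y \<noteq> -y" using y0 two
      by (metis add_eq_0_iff2 mult_2 no_zero_divisors)
    ultimately show ?thesis by simp
  qed
  have fibres: "UNIV - {0} = (\<Union>r\<in>?R. {x. x \<noteq> 0 \<and> x ^ 2 = r})"
    unfolding quad_res_set_def by auto
  have "card (UNIV - {0::'a}) = (\<Sum>r\<in>?R. card {x. x \<noteq> 0 \<and> x ^ 2 = r})"
    unfolding fibres by (rule card_UN_disjoint) auto
  also have "\<dots> = (\<Sum>r\<in>?R. 2)" using two_roots by simp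
  finally show ?thesis by (simp add: card_Diff_singleton)
qed

lemma card_nonresidues:
  assumes two: "(2::'a::{field,finite}) \<noteq> 0"
  shows "card {x::'a. x \<noteq> 0 \<and> x \<notin> quad_res_set} = card (quad_res_set::'a set)"
proof -
  let ?R = "quad_res_set::'a set"
  have "card {x. x \<noteq> 0 \<and> x \<notin> ?R} = card (UNIV - insert 0 ?R)"
    by (rule arg_cong[where f = card]) auto
  moreover have "card (insert 0 ?R) = Suc (card ?R)"
    using quad_res_set_nonzero by (intro card_insert_disjoint) auto
  moreover have "card (UNIV - insert 0 ?R) = CARD('a) - card (insert 0 ?R)"
    by (rule card_Diff_subset) auto
  ultimately show ?thesis using card_quad_res_set[OF two] by linarith
qed

lemma nonresidue_mult_nonresidue:
  assumes two: "(2::'a::{field,finite}) \<noteq> 0"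
    and x: "x \<noteq> 0" "x \<notin> quad_res_set" and y: "y \<noteq> 0" "y \<notin> quad_res_set"
  shows "x * y \<in> (quad_res_set::'a set)"
proof -
  let ?R = "quad_res_set::'a set"
  let ?N = "{z::'a. z \<noteq> 0 \<and> z \<notin> ?R}"
  have "(\<lambda>r. x * r) ` ?R \<subseteq> ?N"
  proof clarify
    fix r assume r: "r \<in> ?R"
    then have "x * r \<notin> ?R" using x quad_res_set_divide[of "x * r" r]
      by (auto dest: quad_res_set_nonzero)
    then show "x * r \<noteq> 0 \<and> x * r \<notin> ?R" using x r by (auto dest: quad_res_set_nonzero)
  qed
  moreover have "card ((\<lambda>r. x * r) ` ?R) = card ?N"
    using x card_nonresidues[OF two] by (simp add: card_image inj_on_def)
  ultimately have "(\<lambda>r. x * r) ` ?R = ?N" by (intro card_subset_eq) simp_all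
  moreover have "y \<in> ?N" using y by simp
  ultimately obtain r where r: "r \<in> ?R" "y = x * r" by (metis imageE)
  then have "x * y = x ^ 2 * r" by (simp add: power2_eq_square)
  then show ?thesis using quad_res_set_mult[OF square_in_quad_res_set[OF x(1)] r(1)] by simp
qed

definition quad_char :: "'a::field \<Rightarrow> int" where
  "quad_char x = (if x = 0 then 0 else if x \<in> quad_res_set then 1 else -1)"

lemma quad_char_residue: "x \<in> quad_res_set \<Longrightarrow> quad_char x = 1"
  by (auto simp: quad_char_def quad_res_set_def)

lemma quad_char_square: "(x::'a::field) \<noteq> 0 \<Longrightarrow> quad_char (x ^ 2) = 1"
  by (rule quad_char_residue[OF square_in_quad_res_set])

lemma quad_char_ge: "quad_char x \<ge> -1"
  by (auto simp: quad_char_def)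

lemma quad_char_mult:
  assumes two: "(2::'a::{field,finite}) \<noteq> 0"
  shows "quad_char (x * y) = quad_char x * quad_char (y::'a)"
proof (cases "x = 0 \<or> y = 0")
  case True then show ?thesis by (auto simp: quad_char_def)
next
  case False
  then have "x \<noteq> 0" "y \<noteq> 0" by auto
  moreover have "x * y \<notin> quad_res_set" if "x \<in> quad_res_set \<longleftrightarrow> y \<notin> quad_res_set"
    using that quad_res_set_divide[of "x * y" x] quad_res_set_divide[of "x * y" y] \<open>x \<noteq> 0\<close> \<open>y \<noteq> 0\<close>
    by auto
  ultimately show ?thesis using quad_res_set_mult[of x y] nonresidue_mult_nonresidue[OF two, of x y]
    by (auto simp: quad_char_def)
qed

lemma quad_char_uminus:
  assumes two: "(2::'a::{field,finite}) \<noteq> 0" and "(-1::'a) \<in> quad_res_set"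
  shows "quad_char (- x) = quad_char (x::'a)"
  using quad_char_mult[OF two, of "-1" x] quad_char_residue[OF assms(2)] by simp

lemma sum_quad_char:
  assumes two: "(2::'a::{field,finite}) \<noteq> 0"
  shows "(\<Sum>x::'a\<in>UNIV. quad_char x) = 0"
proof -
  let ?R = "quad_res_set::'a set"
  have "quad_char x = of_bool (x \<in> ?R) - of_bool (x \<noteq> 0 \<and> x \<notin> ?R)" for x :: 'a
    by (auto simp: quad_char_def quad_res_set_def)
  then have "(\<Sum>x::'a\<in>UNIV. quad_char x) = int (card ?R) - int (card {x::'a. x \<noteq> 0 \<and> x \<notin> ?R})"
    by (simp add: sum_subtractf)
  then show ?thesis using card_nonresidues[OF two] by simp
qed

text \<open>The substitution \<open>z = 1 + d/y\<close> turns \<open>\<chi>(y)\<chi>(y + d) = \<chi>(y\<^sup>2(1 + d/y))\<close> into \<open>\<chi>(z)\<close>,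
  with \<open>z\<close> ranging over all field elements except \<open>1\<close>.\<close>
lemma jacobsthal_sum_shift:
  assumes two: "(2::'a::{field,finite}) \<noteq> 0" and d: "d \<noteq> 0"
  shows "(\<Sum>y::'a\<in>UNIV. quad_char y * quad_char (y + d)) = -1"
proof -
  have "(\<Sum>y::'a\<in>UNIV. quad_char y * quad_char (y + d))
      = (\<Sum>y\<in>UNIV - {0}. quad_char y * quad_char (y + d))"
    by (rule sum.mono_neutral_right) (auto simp: quad_char_def)
  also have "\<dots> = (\<Sum>y\<in>UNIV - {0}. quad_char (1 + d / y))"
  proof (rule sum.cong)
    fix y :: 'a assume "y \<in> UNIV - {0}"
    then have "y \<noteq> 0" by auto
    then have "y * (y + d) = y ^ 2 * (1 + d / y)" by (simp add: field_simps power2_eq_square)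
    then show "quad_char y * quad_char (y + d) = quad_char (1 + d / y)"
      by (metis quad_char_mult[OF two] quad_char_square[OF \<open>y \<noteq> 0\<close>] mult_1)
  qed simp
  also have "\<dots> = (\<Sum>z::'a\<in>UNIV - {1}. quad_char z)"
    by (rule sum.reindex_bij_witness[where i = "\<lambda>z. d / (z - 1)" and j = "\<lambda>y. 1 + d / y"])
      (use d in auto)
  also have "\<dots> = - quad_char (1::'a)"
    by (simp add: sum_diff1 sum_quad_char[OF two])
  finally show ?thesis using quad_char_square[of "1::'a"] by simp
qed

lemma jacobsthal_sum:
  assumes two: "(2::'a::{field,finite}) \<noteq> 0"
  shows "(\<Sum>y::'a\<in>UNIV. quad_char (y - b) * quad_char (y - c))
       = (if b = c then int CARD('a) - 1 else -1)"
proof -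
  have "(\<Sum>y::'a\<in>UNIV. quad_char (y - b) * quad_char (y - c))
      = (\<Sum>y::'a\<in>UNIV. quad_char y * quad_char (y + (b - c)))"
    by (rule sum.reindex_bij_witness[where i = "\<lambda>y. y + b" and j = "\<lambda>y. y - b"]) auto
  also have "\<dots> = (if b = c then int CARD('a) - 1 else -1)"
  proof (cases "b = c")
    case True
    have "(\<Sum>y::'a\<in>UNIV. quad_char y * quad_char y) = (\<Sum>y::'a\<in>UNIV - {0}. 1)"
      by (rule sum.mono_neutral_cong_right) (auto simp: quad_char_def)
    then show ?thesis using True by (simp add: card_Diff_singleton)
  next
    case False
    then show ?thesis using jacobsthal_sum_shift[OF two, of "b - c"] by simp
  qed
  finally show ?thesis .
qed

lemma diff_exact_diff_mem:
  "diff_exact A S \<Longrightarrow> x \<in> A \<Longrightarrow> y \<in> A \<Longrightarrow> x \<noteq> y \<Longrightarrow> x - y \<in> S"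
  unfolding diff_exact_def by blast

lemma diff_exact_obtain:
  assumes "diff_exact A S" "s \<in> S"
  obtains x y where "x \<in> A" "y \<in> A" "s = x - y"
  using assms unfolding diff_exact_def by fast

lemma diff_exact_unique:
  assumes D: "diff_exact A S" and mem: "x \<in> A" "y \<in> A" "u \<in> A" "v \<in> A"
    and "x - y \<in> S" "x - y = u - v"
  shows "x = u \<and> y = v"
proof -
  have "\<exists>!(a1, a2). a1 \<in> A \<and> a2 \<in> A \<and> x - y = a1 - a2"
    using D \<open>x - y \<in> S\<close> unfolding diff_exact_def by blast
  then obtain p where p: "\<And>q. (case q of (a1, a2) \<Rightarrow> a1 \<in> A \<and> a2 \<in> A \<and> x - y = a1 - a2) \<Longrightarrow> q = p"
    by (metis (no_types, lifting))
  have "(x, y) = p" "(u, v) = p" using mem \<open>x - y = u - v\<close> by (auto intro!: p)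
  then show ?thesis by (metis prod.inject)
qed

lemma diff_exact_no_opposites:
  assumes D: "diff_exact A S" and "0 \<in> A" "a \<in> A" "-a \<in> A"
  shows "a = 0"
proof (rule ccontr)
  assume "a \<noteq> 0"
  then have "a - 0 \<in> S" using diff_exact_diff_mem[OF D \<open>a \<in> A\<close> \<open>0 \<in> A\<close>] by simp
  then show False
    using diff_exact_unique[OF D \<open>a \<in> A\<close> \<open>0 \<in> A\<close> \<open>0 \<in> A\<close> \<open>-a \<in> A\<close>] \<open>a \<noteq> 0\<close> by simp
qed

lemma diff_exact_uminus_one_residue:
  assumes D: "diff_exact A (quad_res_set::'a::field set)" and "0 \<in> A" "a \<in> A" "a \<noteq> 0"
  shows "-1 \<in> (quad_res_set::'a set)"
proof -
  have "(0 - a) / (a - 0) \<in> quad_res_set"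
    using assms by (intro quad_res_set_divide diff_exact_diff_mem[OF D]) auto
  then show ?thesis using \<open>a \<noteq> 0\<close> by simp
qed

lemma card_off_diagonal:
  assumes "finite A"
  shows "card {p \<in> A \<times> A. fst p \<noteq> snd p} = card A * card A - card A"
proof -
  have "{p \<in> A \<times> A. fst p \<noteq> snd p} = A \<times> A - (\<lambda>x. (x, x)) ` A" by auto
  moreover have "card ((\<lambda>x. (x, x)) ` A) = card A" by (rule card_image) (auto simp: inj_on_def)
  ultimately show ?thesis
    using assms by (simp add: card_Diff_subset card_cartesian_product image_subset_iff)
qed

lemma diff_exact_card:
  assumes D: "diff_exact A S" and "finite A" "0 \<notin> S"
  shows "card A * card A - card A = card S"
proof -
  let ?P = "{p \<in> A \<times> A. fst p \<noteq> snd p}"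
  have "bij_betw (\<lambda>p. fst p - snd p) ?P S"
  proof (rule bij_betwI')
    fix p q assume "p \<in> ?P" "q \<in> ?P"
    then show "(fst p - snd p = fst q - snd q) = (p = q)"
      using diff_exact_unique[OF D, of "fst p" "snd p" "fst q" "snd q"]
        diff_exact_diff_mem[OF D, of "fst p" "snd p"]
      by (auto simp: prod_eq_iff)
  next
    fix p assume "p \<in> ?P"
    then show "fst p - snd p \<in> S" using diff_exact_diff_mem[OF D] by auto
  next
    fix s assume "s \<in> S"
    then obtain x y where "x \<in> A" "y \<in> A" "s = x - y" by (rule diff_exact_obtain[OF D])
    moreover have "x \<noteq> y" using \<open>s \<in> S\<close> \<open>0 \<notin> S\<close> \<open>s = x - y\<close> by auto
    ultimately show "\<exists>p\<in>?P. s = fst p - snd p" by (intro bexI[of _ "(x, y)"]) auto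
  qed
  then show ?thesis using card_off_diagonal[OF \<open>finite A\<close>] by (simp add: bij_betw_same_card)
qed

definition quad_char_sum :: "'a::field set \<Rightarrow> 'a \<Rightarrow> int" where
  "quad_char_sum A y = (\<Sum>b\<in>A. quad_char (y - b))"

lemma sum_quad_char_sum_mult:
  fixes A B :: "'a::{field,finite} set"
  assumes two: "(2::'a) \<noteq> 0"
  shows "(\<Sum>y\<in>UNIV. quad_char_sum A y * quad_char_sum B y)
       = int CARD('a) * int (card (A \<inter> B)) - int (card A) * int (card B)"
proof -
  have "(\<Sum>y\<in>UNIV. quad_char_sum A y * quad_char_sum B y)
      = (\<Sum>b\<in>A. \<Sum>c\<in>B. \<Sum>y\<in>UNIV. quad_char (y - b) * quad_char (y - c))"
    unfolding quad_char_sum_def sum_product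
    by (subst sum.swap) (simp add: sum.swap[where A = UNIV])
  also have "\<dots> = (\<Sum>b\<in>A. \<Sum>c\<in>B. (if b = c then int CARD('a) else 0) - 1)"
    by (auto simp: jacobsthal_sum[OF two] intro!: sum.cong)
  also have "\<dots> = (\<Sum>b\<in>A. (if b \<in> B then int CARD('a) else 0) - int (card B))"
    by (simp add: sum_subtractf)
  also have "\<dots> = int CARD('a) * int (card (A \<inter> B)) - int (card A) * int (card B)"
    by (simp add: sum_subtractf sum.inter_restrict[symmetric])
  finally show ?thesis .
qed

lemma quad_char_sum_uminus:
  assumes two: "(2::'a::{field,finite}) \<noteq> 0" and m1: "(-1::'a) \<in> quad_res_set"
  shows "quad_char_sum A (- y) = quad_char_sum (uminus ` A) (y::'a)"
proof -
  have "quad_char (- y - b) = quad_char (y - (- b))" for b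
    using quad_char_uminus[OF two m1, of "y + b"] by simp
  then show ?thesis unfolding quad_char_sum_def by (simp add: sum.reindex inj_on_def)
qed

lemma sum_symmetrized_quad_char_sum_squared:
  fixes A :: "'a::{field,finite} set"
  assumes two: "(2::'a) \<noteq> 0" and m1: "(-1::'a) \<in> quad_res_set"
    and opp: "A \<inter> uminus ` A = {0}"
  shows "(\<Sum>y\<in>UNIV. (quad_char_sum A y + quad_char_sum A (- y)) ^ 2)
       = 2 * int (card A) * (int CARD('a) - int (card A)) + 2 * (int CARD('a) - int (card A) ^ 2)"
proof -
  let ?f = "quad_char_sum A"
  have "(\<Sum>y\<in>UNIV. (?f (- y)) ^ 2) = (\<Sum>y\<in>UNIV. (?f y) ^ 2)"
    by (rule sum.reindex_bij_witness[where i = uminus and j = uminus]) auto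
  moreover have "(\<Sum>y\<in>UNIV. (?f y + ?f (- y)) ^ 2)
      = (\<Sum>y\<in>UNIV. (?f y) ^ 2) + (\<Sum>y\<in>UNIV. (?f (- y)) ^ 2) + 2 * (\<Sum>y\<in>UNIV. ?f y * ?f (- y))"
    by (simp add: power2_sum sum.distrib sum_distrib_left mult.assoc)
  ultimately have "(\<Sum>y\<in>UNIV. (?f y + ?f (- y)) ^ 2)
      = 2 * (\<Sum>y\<in>UNIV. ?f y * ?f y) + 2 * (\<Sum>y\<in>UNIV. ?f y * quad_char_sum (uminus ` A) y)"
    by (simp add: quad_char_sum_uminus[OF two m1] power2_eq_square)
  moreover have "card (uminus ` A) = card A" by (simp add: card_image)
  ultimately show ?thesis
    using opp by (simp add: sum_quad_char_sum_mult[OF two] power2_eq_square algebra_simps)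
qed

lemma diff_exact_quad_res_card:
  fixes A :: "'a::{field,finite} set"
  assumes two: "(2::'a) \<noteq> 0" and D: "diff_exact A quad_res_set"
  shows "int CARD('a) = 2 * int (card A) ^ 2 - 2 * int (card A) + 1"
proof -
  have "2 * (card A * card A - card A) = CARD('a) - 1"
    using diff_exact_card[OF D] card_quad_res_set[OF two] by (simp add: quad_res_set_def)
  then have "2 * int (card A * card A - card A) = int (CARD('a) - 1)" by linarith
  moreover have "int (card A * card A - card A) = int (card A) * int (card A) - int (card A)"
    by simp
  moreover have "int (CARD('a) - 1) = int CARD('a) - 1" by simp
  ultimately show ?thesis by (simp add: power2_eq_square)
qed

lemma diff_exact_quad_char_sum_member:
  fixes A :: "'a::{field,finite} set"
  assumes D: "diff_exact A quad_res_set" and "a \<in> A"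
  shows "quad_char_sum A a = int (card A) - 1"
proof -
  have "quad_char (a - b) = 1 - (if a = b then 1 else 0)" if "b \<in> A" for b
    using quad_char_residue[OF diff_exact_diff_mem[OF D \<open>a \<in> A\<close> that]]
    by (auto simp: quad_char_def)
  then show ?thesis
    unfolding quad_char_sum_def using \<open>a \<in> A\<close> by (simp add: sum_subtractf)
qed

lemma diff_exact_quad_char_sum_opposite_member:
  fixes A :: "'a::{field,finite} set"
  assumes two: "(2::'a) \<noteq> 0" and D: "diff_exact A quad_res_set"
    and A0: "0 \<in> A" and a: "a \<in> A" "a \<noteq> 0"
    and sums: "\<And>x y. x \<in> A \<Longrightarrow> y \<in> A \<Longrightarrow> x \<noteq> 0 \<Longrightarrow> y \<noteq> 0 \<Longrightarrow> x \<noteq> y \<Longrightarrow> x + y \<in> quad_res_set"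
  shows "quad_char_sum A (- a) \<ge> int (card A) - 2"
proof -
  have m1: "(-1::'a) \<in> quad_res_set" by (rule diff_exact_uminus_one_residue[OF D A0 a])
  have "1 - (if a = b then 2 else 0) \<le> quad_char (- a - b)" if "b \<in> A" for b
  proof -
    have "quad_char (- a - b) = quad_char (a + b)"
      using quad_char_uminus[OF two m1, of "a + b"] by simp
    moreover have "a + b \<in> quad_res_set" if "b \<noteq> a"
      using sums[OF a(1) \<open>b \<in> A\<close> a(2) _ that[symmetric]]
        diff_exact_diff_mem[OF D a(1) A0 a(2)] by (cases "b = 0") auto
    ultimately show ?thesis using quad_char_ge[of "- a - b"] by (auto simp: quad_char_residue)
  qed
  then have "(\<Sum>b\<in>A. 1 - (if a = b then 2 else 0)) \<le> quad_char_sum A (- a)"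
    unfolding quad_char_sum_def by (rule sum_mono)
  then show ?thesis using a(1) by (simp add: sum_subtractf)
qed

lemma sum_ge_at_zero_and_opposite_pairs:
  fixes G :: "'a::{ab_group_add,finite} \<Rightarrow> 'b::ordered_comm_monoid_add"
  assumes "\<And>y. G y \<ge> 0" "0 \<in> A" "A \<inter> uminus ` A = {0}"
  shows "G 0 + (\<Sum>a\<in>A - {0}. G a + G (- a)) \<le> (\<Sum>y\<in>UNIV. G y)"
proof -
  have "A \<inter> uminus ` (A - {0}) = {}" using assms(3) by force
  then have "(\<Sum>y\<in>A \<union> uminus ` (A - {0}). G y) = (\<Sum>y\<in>A. G y) + (\<Sum>a\<in>A - {0}. G (- a))"
    by (simp add: sum.union_disjoint sum.reindex inj_on_def)
  also have "\<dots> = G 0 + (\<Sum>a\<in>A - {0}. G a + G (- a))"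
    using assms(2) by (simp add: sum.remove sum.distrib add.assoc)
  finally show ?thesis using assms(1) by (metis sum_mono2 finite subset_UNIV)
qed

lemma diff_exact_quad_res_card_le_four:
  fixes A :: "'a::{field,finite} set"
  assumes two: "(2::'a) \<noteq> 0" and D: "diff_exact A quad_res_set"
    and A0: "0 \<in> A" and a0: "a0 \<in> A" "a0 \<noteq> 0"
    and sums: "\<And>x y. x \<in> A \<Longrightarrow> y \<in> A \<Longrightarrow> x \<noteq> 0 \<Longrightarrow> y \<noteq> 0 \<Longrightarrow> x \<noteq> y \<Longrightarrow> x + y \<in> quad_res_set"
  shows "card A \<le> 4"
proof -
  let ?f = "quad_char_sum A"
  let ?n = "int (card A)"
  define G where "G y = (?f y + ?f (- y)) ^ 2" for y
  have m1: "(-1::'a) \<in> quad_res_set" by (rule diff_exact_uminus_one_residue[OF D A0 a0])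
  have opp: "A \<inter> uminus ` A = {0}"
    using A0 diff_exact_no_opposites[OF D A0] by force
  have "card {0, a0} \<le> card A" using A0 a0 by (intro card_mono) auto
  then have n2: "?n \<ge> 2" using a0 by simp
  have card_nonzero: "int (card (A - {0})) = ?n - 1"
    using A0 n2 by (simp add: card_Diff_singleton)
  have G0: "G 0 = (2 * ?n - 2) ^ 2"
    unfolding G_def using diff_exact_quad_char_sum_member[OF D A0] by simp
  have Ga: "(2 * ?n - 3) ^ 2 \<le> G a" if "a \<in> A - {0}" for a
  proof -
    have "2 * ?n - 3 \<le> ?f a + ?f (- a)"
      using that diff_exact_quad_char_sum_member[OF D]
        diff_exact_quad_char_sum_opposite_member[OF two D A0 _ _ sums] by fastforce
    then show ?thesis unfolding G_def using n2 by (intro power_mono) auto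
  qed
  have "G (- a) = G a" for a unfolding G_def by (simp add: add.commute)
  then have "(2 * ?n - 2) ^ 2 + (?n - 1) * (2 * (2 * ?n - 3) ^ 2)
      \<le> G 0 + (\<Sum>a\<in>A - {0}. G a + G (- a))"
    using G0 Ga sum_mono[of "A - {0}" "\<lambda>_. 2 * (2 * ?n - 3) ^ 2" "\<lambda>a. G a + G (- a)"]
    by (simp add: card_nonzero)
  also have "\<dots> \<le> (\<Sum>y\<in>UNIV. G y)"
    by (rule sum_ge_at_zero_and_opposite_pairs[OF _ A0 opp]) (simp add: G_def)
  also have "\<dots> = 2 * ?n * (int CARD('a) - ?n) + 2 * (int CARD('a) - ?n ^ 2)"
    unfolding G_def by (rule sum_symmetrized_quad_char_sum_squared[OF two m1 opp])
  finally have "(?n - 4) * (2 * (?n - 1)) ^ 2 \<le> 0"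
    unfolding diff_exact_quad_res_card[OF two D] by (simp add: algebra_simps power2_eq_square)
  then show ?thesis using n2 by (simp add: mult_le_0_iff)
qed

lemma mult_subgroup_card_two_uminus_one:
  fixes H :: "'a::field set"
  assumes H: "mult_subgroup H" and "card H = 2"
  shows "-1 \<in> H"
proof -
  obtain h where h: "H = {1, h}" "h \<noteq> 1"
    using \<open>card H = 2\<close> H unfolding mult_subgroup_def card_2_iff by (metis insert_commute insertE singletonD)
  have "h \<noteq> 0" "h * h \<in> H" using H h unfolding mult_subgroup_def by auto
  moreover have "h * h \<noteq> h" using \<open>h \<noteq> 0\<close> h(2) by simp
  ultimately have "(h - 1) * (h + 1) = 0" using h(1) by (simp add: algebra_simps)
  then have "h = -1" using h(2) by (simp add: add_eq_0_iff2)
  then show ?thesis using h(1) by simp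
qed

text \<open>For \<open>a = gh\<^sub>1, b = gh\<^sub>2\<close> the elements \<open>a\<^sup>2/g = gh\<^sub>1\<^sup>2\<close>, \<open>b\<^sup>2/g\<close> lie in \<open>A\<close>, so
  \<open>(a + b)(a - b) = g (a\<^sup>2/g - b\<^sup>2/g)\<close> is a product of two residues.\<close>
lemma diff_exact_coset_sum_residue:
  fixes H :: "'a::field set" and g :: 'a
  defines "A \<equiv> (\<lambda>h. g * h) ` H \<union> {0}"
  assumes H: "mult_subgroup H" and "g \<noteq> 0" and D: "diff_exact A quad_res_set"
    and ab: "a \<in> A" "b \<in> A" "a \<noteq> 0" "b \<noteq> 0" "a \<noteq> b"
  shows "a + b \<in> quad_res_set"
proof -
  have A0: "0 \<in> A" unfolding A_def by simp
  have "g \<in> A" using H unfolding A_def mult_subgroup_def by force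
  then have g: "g \<in> quad_res_set" using diff_exact_diff_mem[OF D _ A0 \<open>g \<noteq> 0\<close>] by simp
  have square_div: "x ^ 2 / g \<in> A" if x: "x \<in> A" for x
  proof (cases "x = 0")
    case False
    then obtain h where "h \<in> H" "x = g * h" using x unfolding A_def by auto
    moreover from this have "h * h \<in> H" using H unfolding mult_subgroup_def by blast
    ultimately show ?thesis using \<open>g \<noteq> 0\<close> unfolding A_def by (auto simp: power2_eq_square)
  qed (simp add: A0)
  have "a ^ 2 \<noteq> b ^ 2"
    using ab diff_exact_no_opposites[OF D A0 ab(1)] by (auto simp: power2_eq_iff)
  then have "a ^ 2 / g - b ^ 2 / g \<in> quad_res_set"
    using \<open>g \<noteq> 0\<close> by (intro diff_exact_diff_mem[OF D square_div[OF ab(1)] square_div[OF ab(2)]]) auto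
  then have "g * (a ^ 2 / g - b ^ 2 / g) / (a - b) \<in> quad_res_set"
    by (intro quad_res_set_divide quad_res_set_mult g diff_exact_diff_mem[OF D ab(1,2,5)])
  moreover have "g * (a ^ 2 / g - b ^ 2 / g) = (a + b) * (a - b)"
    using \<open>g \<noteq> 0\<close> by (simp add: field_simps power2_eq_square)
  ultimately show ?thesis using ab(5) by simp
qed

lemma card_mult_coset_insert_zero:
  fixes H :: "'a::field set"
  assumes H: "mult_subgroup H" and "g \<noteq> 0" and "finite H"
  shows "card ((\<lambda>h. g * h) ` H \<union> {0}) = card H + 1"
proof -
  have "0 \<notin> (\<lambda>h. g * h) ` H" "card ((\<lambda>h. g * h) ` H) = card H"
    using H \<open>g \<noteq> 0\<close> unfolding mult_subgroup_def by (auto simp: card_image inj_on_def)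
  then show ?thesis using \<open>finite H\<close> by simp
qed

lemma diff_exact_coset_card:
  fixes H :: "'a::{field,finite} set"
  assumes two: "(2::'a) \<noteq> 0" and H: "mult_subgroup H" and "g \<noteq> 0"
    and D: "diff_exact ((\<lambda>h. g * h) ` H \<union> {0}) quad_res_set"
  shows "int CARD('a) = 2 * int (card H) * (int (card H) + 1) + 1"
  using diff_exact_quad_res_card[OF two D] card_mult_coset_insert_zero[OF H \<open>g \<noteq> 0\<close>]
  by (simp add: power2_eq_square algebra_simps)

lemma diff_exact_coset_card_le_three:
  fixes H :: "'a::{field,finite} set"
  assumes two: "(2::'a) \<noteq> 0" and H: "mult_subgroup H" and "g \<noteq> 0"
    and D: "diff_exact ((\<lambda>h. g * h) ` H \<union> {0}) quad_res_set"
  shows "card H \<le> 3"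
proof -
  have "g \<in> (\<lambda>h. g * h) ` H \<union> {0}" using H unfolding mult_subgroup_def by force
  then have "card ((\<lambda>h. g * h) ` H \<union> {0}) \<le> 4"
    using diff_exact_coset_sum_residue[OF H \<open>g \<noteq> 0\<close> D]
    by (intro diff_exact_quad_res_card_le_four[OF two D _ _ \<open>g \<noteq> 0\<close>]) auto
  then show ?thesis using card_mult_coset_insert_zero[OF H \<open>g \<noteq> 0\<close>] by simp
qed

lemma diff_exact_coset_card_neq_two:
  fixes H :: "'a::field set"
  assumes H: "mult_subgroup H" and "g \<noteq> 0"
    and D: "diff_exact ((\<lambda>h. g * h) ` H \<union> {0}) quad_res_set"
  shows "card H \<noteq> 2"
proof
  assume "card H = 2"
  then have "- g \<in> (\<lambda>h. g * h) ` H" using mult_subgroup_card_two_uminus_one[OF H] by force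
  moreover have "g \<in> (\<lambda>h. g * h) ` H" using H unfolding mult_subgroup_def by force
  ultimately show False using diff_exact_no_opposites[OF D, of g] \<open>g \<noteq> 0\<close> by simp
qed

lemma two_neq_zero_mod_ring:
  assumes "CARD('p::prime_card) > 2"
  shows "(2::'p mod_ring) \<noteq> 0"
  using assms of_nat_0_mod_ring_dvd[of 2] dvd_imp_le[of "CARD('p)" 2] by fastforce

theorem theorem2:
  assumes "CARD('p::prime_card) > 5"
  shows "\<not> (\<exists>(H :: 'p mod_ring set) (g :: 'p mod_ring).
            mult_subgroup H \<and> g \<noteq> 0 \<and>
            diff_exact ((\<lambda>h. g * h) ` H \<union> {0}) quad_res_set)"
proof clarify
  fix H and g :: "'p mod_ring"
  assume H: "mult_subgroup H" and "g \<noteq> 0"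
    and D: "diff_exact ((\<lambda>h. g * h) ` H \<union> {0}) quad_res_set"
  have two: "(2::'p mod_ring) \<noteq> 0" using assms by (intro two_neq_zero_mod_ring) simp
  have q: "int CARD('p) = 2 * int (card H) * (int (card H) + 1) + 1"
    using diff_exact_coset_card[OF two H \<open>g \<noteq> 0\<close> D] by simp
  have "card H \<le> 3" "card H \<noteq> 2"
    using diff_exact_coset_card_le_three[OF two H \<open>g \<noteq> 0\<close> D]
      diff_exact_coset_card_neq_two[OF H \<open>g \<noteq> 0\<close> D] by auto
  moreover have "card H \<noteq> 0" "card H \<noteq> 1" using q assms by auto
  ultimately have "card H = 3" by linarith
  then have "CARD('p) = 25" using q by simp
  then show False using prime_card[where 'a = 'p] prime_product[of "5::nat" 5] by simp
qed

end
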